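(* Let $d,k\geq2$. Suppose that $\Lambda\leq\mathrm{AAut}(\mathcal{T}_{d,k})$ contains a translation and that $G\leq\mathrm{AAut}(\mathcal{T}_{d,k})$ commensurates $\Lambda$. Then there exists a proper ball $B\subseteq\partial\mathcal{T}_{d,k}$ such that $[G_B,G_B]\leq\Lambda$. If additionally $L\leq[G_B,G_B]$ is a subgroup with no proper finite index subgroup, then $\Lambda$ contains the subgroup generated by all $G$-conjugates of $L$.
   Context: $\mathcal{T}_{d,k}$ is the rooted tree whose root $r$ has degree $k$ and all other vertices have degree $d+1$. Its boundary $\partial\mathcal{T}_{d,k}$ is the set of rays $(r=\xi_0,\xi_1,\dots)$ with $\xi_{n+1}$ a child of $\xi_n$; with $N(\xi,\xi')$ the largest $n$ such that $\xi_n=\xi'_n$, put $\mathrm{dist}(\xi,\xi')=d^{-N(\xi,\xi')}$. A homothety is a map multiplying all distances by a fixed positive constant. An almost automorphism is a homeomorphism $g$ of $\partial\mathcal{T}_{d,k}$ for which there is a partition of $\partial\mathcal{T}_{d,k}$ into finitely many proper balls $B_1,\dots,B_n$ with each $g|_{B_i}:B_i\to g(B_i)$ a homothety; $\mathrm{AAut}(\mathcal{T}_{d,k})$ is the group of almost automorphisms. An element $h$ is a translation if there is a ball $B$ and $n\in\mathbb{Z}$ with $h^n|_B:B\to h^n(B)$ a homothety and $h^n(B)\subsetneq B$. For a ball $B$, $G_B$ denotes the subgroup of elements of $G$ acting trivially on $\partial\mathcal{T}_{d,k}\setminus B$. $G$ commensurates $\Lambda$ if $g\Lambda g^{-1}\cap\Lambda$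 has finite index in $\Lambda$ for all $g\in G$. *)

theory Defs
  imports Complex_Main "HOL-Algebra.Algebra"
begin

text \<open>A ray (r = xi_0, xi_1, ...) is encoded by the sequence of child
  indices: xi 0 < k is the child of the root chosen at step 1, and xi n < d (n >= 1)
  the child chosen at step n+1. Vertex xi_n of the ray is the prefix of length n.\<close>

type_synonym ray = "nat \<Rightarrow> nat"

definition boundary :: "nat \<Rightarrow> nat \<Rightarrow> ray set" where
  "boundary d k = {\<xi>. \<xi> 0 < k \<and> (\<forall>n\<ge>1. \<xi> n < d)}"

text \<open>N(xi,xi') is the largest n with equal level-n vertices, i.e. the length of the
  common prefix = least index where the sequences differ; dist = d^(-N), and 0 on the diagonal.\<close>

definition tdist :: "nat \<Rightarrow> ray \<Rightarrow> ray \<Rightarrow> real" where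
  "tdist d \<xi> \<eta> = (if \<xi> = \<eta> then 0 else 1 / real d ^ (LEAST n. \<xi> n \<noteq> \<eta> n))"

definition is_ball :: "nat \<Rightarrow> nat \<Rightarrow> ray set \<Rightarrow> bool" where
  "is_ball d k B \<longleftrightarrow> (\<exists>\<xi>\<in>boundary d k. \<exists>r>0. B = {\<eta>\<in>boundary d k. tdist d \<xi> \<eta> \<le> r})"

definition proper_ball :: "nat \<Rightarrow> nat \<Rightarrow> ray set \<Rightarrow> bool" where
  "proper_ball d k B \<longleftrightarrow> is_ball d k B \<and> B \<noteq> boundary d k"

definition homothety_on :: "nat \<Rightarrow> ray set \<Rightarrow> (ray \<Rightarrow> ray) \<Rightarrow> bool" where
  "homothety_on d B f \<longleftrightarrow>
     (\<exists>c>0. \<forall>x\<in>B. \<forall>y\<in>B. tdist d (f x) (f y) = c * tdist d x y)"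

definition tcont_on :: "nat \<Rightarrow> ray set \<Rightarrow> (ray \<Rightarrow> ray) \<Rightarrow> bool" where
  "tcont_on d S f \<longleftrightarrow>
     (\<forall>x\<in>S. \<forall>e>0. \<exists>\<delta>>0. \<forall>y\<in>S. tdist d x y < \<delta> \<longrightarrow> tdist d (f x) (f y) < e)"

definition homeomorphism_bd :: "nat \<Rightarrow> nat \<Rightarrow> (ray \<Rightarrow> ray) \<Rightarrow> bool" where
  "homeomorphism_bd d k g \<longleftrightarrow>
     bij_betw g (boundary d k) (boundary d k) \<and> tcont_on d (boundary d k) g \<and>
     tcont_on d (boundary d k) (inv_into (boundary d k) g)"

text \<open>Almost automorphisms, normalised to act as the identity off the boundary.\<close>

definition almost_aut :: "nat \<Rightarrow> nat \<Rightarrow> (ray \<Rightarrow> ray) \<Rightarrow> bool" where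
  "almost_aut d k g \<longleftrightarrow>
     homeomorphism_bd d k g \<and> (\<forall>x. x \<notin> boundary d k \<longrightarrow> g x = x) \<and>
     (\<exists>P. finite P \<and> (\<forall>B\<in>P. proper_ball d k B) \<and>
          (\<forall>B1\<in>P. \<forall>B2\<in>P. B1 \<noteq> B2 \<longrightarrow> B1 \<inter> B2 = {}) \<and>
          \<Union>P = boundary d k \<and> (\<forall>B\<in>P. homothety_on d B g))"

definition AAut :: "nat \<Rightarrow> nat \<Rightarrow> (ray \<Rightarrow> ray) monoid" where
  "AAut d k = \<lparr>carrier = {g. almost_aut d k g}, monoid.mult = (\<circ>), one = id\<rparr>"

definition translation :: "nat \<Rightarrow> nat \<Rightarrow> (ray \<Rightarrow> ray) \<Rightarrow> bool" where
  "translation d k h \<longleftrightarrow> h \<in> carrier (AAut d k) \<and>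
     (\<exists>B (n::int). is_ball d k B \<and> homothety_on d B (h [^]\<^bsub>AAut d k\<^esub> n) \<and>
        (h [^]\<^bsub>AAut d k\<^esub> n) ` B \<subset> B)"

definition rigid_stab :: "nat \<Rightarrow> nat \<Rightarrow> (ray \<Rightarrow> ray) set \<Rightarrow> ray set \<Rightarrow> (ray \<Rightarrow> ray) set" where
  "rigid_stab d k G B = {g\<in>G. \<forall>x\<in>boundary d k - B. g x = x}"

definition conj_set :: "nat \<Rightarrow> nat \<Rightarrow> (ray \<Rightarrow> ray) \<Rightarrow> (ray \<Rightarrow> ray) set \<Rightarrow> (ray \<Rightarrow> ray) set" where
  "conj_set d k g H = (\<lambda>h. g \<otimes>\<^bsub>AAut d k\<^esub> h \<otimes>\<^bsub>AAut d k\<^esub> inv\<^bsub>AAut d k\<^esub> g) ` H"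

definition finite_index_in :: "nat \<Rightarrow> nat \<Rightarrow> (ray \<Rightarrow> ray) set \<Rightarrow> (ray \<Rightarrow> ray) set \<Rightarrow> bool" where
  "finite_index_in d k H K \<longleftrightarrow> finite (rcosets\<^bsub>(AAut d k)\<lparr>carrier := K\<rparr>\<^esub> H)"

definition commensurates :: "nat \<Rightarrow> nat \<Rightarrow> (ray \<Rightarrow> ray) set \<Rightarrow> (ray \<Rightarrow> ray) set \<Rightarrow> bool" where
  "commensurates d k G \<Lambda> \<longleftrightarrow> (\<forall>g\<in>G. finite_index_in d k (conj_set d k g \<Lambda> \<inter> \<Lambda>) \<Lambda>)"

definition no_proper_fi_subgroup :: "nat \<Rightarrow> nat \<Rightarrow> (ray \<Rightarrow> ray) set \<Rightarrow> bool" where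
  "no_proper_fi_subgroup d k L \<longleftrightarrow>
     (\<forall>H. subgroup H (AAut d k) \<and> H \<subseteq> L \<and> finite_index_in d k H L \<longrightarrow> H = L)"

end

theory Submission
  imports Defs
begin

text \<open>A translation in \<Lambda> has a power f that contracts some ball homothetically. In an
  ultrametric, a contraction keeps every point close to a non-fixed point p at distance at least
  dist p (f p) from p under all iterates, so a small ball C around p is disjoint from all its
  images under positive powers of f. As G commensurates \<Lambda>, every g \<in> G conjugates some
  power of f into \<Lambda> (pigeonhole on the finitely many cosets). For g1, g2 \<in> G_C choose a
  power a of f with g1 a g1\<inverse> and g2 a^2 g2\<inverse> in \<Lambda>; then the commutators
  [g1, a] and [g2, a^2] lie in \<Lambda>, and because C, a C and a^2 C are pairwise disjoint,
  [[g1, a], [g2, a^2]] = [g1, g2]. For the second claim, L \<inter> g\<inverse> \<Lambda> g has finite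
  index in L and hence equals L.

  Most of the work goes into showing that the almost automorphisms form a group; the key fact
  is that a homothety of a cylinder whose inverse is continuous maps it onto a cylinder.\<close>

section \<open>Distances and cylinders\<close>

lemma inv_pow_le_iff:
  assumes "d \<ge> (2::nat)"
  shows "1 / real d ^ N \<le> 1 / real d ^ n \<longleftrightarrow> n \<le> N"
proof -
  have d1: "real d > 1" using assms by auto
  then have "1 / real d ^ N \<le> 1 / real d ^ n \<longleftrightarrow> real d ^ n \<le> real d ^ N"
    by (simp add: divide_le_eq le_divide_eq)
  also have "\<dots> \<longleftrightarrow> n \<le> N" using d1 by simp
  finally show ?thesis .
qed

lemma inv_pow_less_iff:
  assumes "d \<ge> (2::nat)"
  shows "1 / real d ^ N < 1 / real d ^ n \<longleftrightarrow> n < N"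
  using inv_pow_le_iff[OF assms, of n N] by (meson not_le)

lemma ex_inv_pow_less:
  assumes "d \<ge> (2::nat)" "\<delta> > 0"
  shows "\<exists>J. 1 / real d ^ J < \<delta>"
proof -
  have "\<exists>n. (1 / real d) ^ n < \<delta>" using assms by (intro real_arch_pow_inv) auto
  then show ?thesis by (auto simp: power_one_over)
qed

lemma tdist_sym: "tdist d x y = tdist d y x"
  unfolding tdist_def by (auto simp: eq_commute)

lemma tdist_nonneg: "0 \<le> tdist d x y"
  unfolding tdist_def by auto

lemma tdist_self [simp]: "tdist d x x = 0"
  unfolding tdist_def by auto

lemma tdist_eq_inv_pow: "x \<noteq> y \<Longrightarrow> \<exists>N. tdist d x y = 1 / real d ^ N"
  unfolding tdist_def by auto

lemma tdist_pos: "d \<ge> 2 \<Longrightarrow> x \<noteq> y \<Longrightarrow> 0 < tdist d x y"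
  unfolding tdist_def by simp

lemma tdist_le_inv_pow_iff:
  assumes "d \<ge> 2"
  shows "tdist d x y \<le> 1 / real d ^ n \<longleftrightarrow> (\<forall>i<n. x i = y i)"
proof (cases "x = y")
  case False
  define N where "N = (LEAST n. x n \<noteq> y n)"
  have "\<exists>n. x n \<noteq> y n" using False by auto
  then have xN: "x N \<noteq> y N" unfolding N_def by (rule LeastI_ex)
  have below: "\<And>i. i < N \<Longrightarrow> x i = y i" unfolding N_def using not_less_Least by blast
  have "n \<le> N \<longleftrightarrow> (\<forall>i<n. x i = y i)"
    using below xN by (metis le_less_trans less_le not_le)
  then show ?thesis using False inv_pow_le_iff[OF assms] unfolding tdist_def N_def by auto
qed simp

lemma tdist_less_inv_pow_iff:
  assumes "d \<ge> 2"
  shows "tdist d x y < 1 / real d ^ n \<longleftrightarrow> (\<forall>i<Suc n. x i = y i)"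
proof (cases "x = y")
  case False
  then obtain N where N: "tdist d x y = 1 / real d ^ N" using tdist_eq_inv_pow by blast
  have "1 / real d ^ N < 1 / real d ^ n \<longleftrightarrow> 1 / real d ^ N \<le> 1 / real d ^ Suc n"
    using inv_pow_less_iff[OF assms] inv_pow_le_iff[OF assms]
    by (simp del: power_Suc add: Suc_le_eq)
  then show ?thesis using N tdist_le_inv_pow_iff[OF assms, of x y "Suc n"] by simp
qed (use assms in simp)

lemma tdist_ultrametric:
  assumes "d \<ge> 2"
  shows "tdist d x z \<le> max (tdist d x y) (tdist d y z)"
proof (cases "x = y \<or> y = z")
  case False
  then obtain N where N: "max (tdist d x y) (tdist d y z) = 1 / real d ^ N"
    using tdist_eq_inv_pow[of x y d] tdist_eq_inv_pow[of y z d] by (metis max_def)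
  then have "tdist d x y \<le> 1 / real d ^ N" "tdist d y z \<le> 1 / real d ^ N"
    by (metis max.cobounded1, metis max.cobounded2)
  then have "\<forall>i<N. x i = y i" "\<forall>i<N. y i = z i" using tdist_le_inv_pow_iff[OF assms] by blast+
  then have "tdist d x z \<le> 1 / real d ^ N" using tdist_le_inv_pow_iff[OF assms] by auto
  then show ?thesis using N by simp
qed auto

definition cyl :: "nat \<Rightarrow> nat \<Rightarrow> ray \<Rightarrow> nat \<Rightarrow> ray set" where
  "cyl d k p n = {\<eta> \<in> boundary d k. \<forall>i<n. \<eta> i = p i}"

lemma cyl_0 [simp]: "cyl d k p 0 = boundary d k"
  unfolding cyl_def by auto

lemma cyl_subset_boundary: "cyl d k p n \<subseteq> boundary d k"
  unfolding cyl_def by auto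

lemma cyl_antimono: "m \<le> n \<Longrightarrow> cyl d k p n \<subseteq> cyl d k p m"
  unfolding cyl_def by auto

lemma cyl_eq_of_mem: "q \<in> cyl d k p n \<Longrightarrow> cyl d k q n = cyl d k p n"
  unfolding cyl_def by auto

lemma cyl_self: "p \<in> boundary d k \<Longrightarrow> p \<in> cyl d k p n"
  unfolding cyl_def by auto

lemma cyl_eq_closed_ball:
  "d \<ge> 2 \<Longrightarrow> cyl d k p n = {\<eta>\<in>boundary d k. tdist d p \<eta> \<le> 1 / real d ^ n}"
  unfolding cyl_def using tdist_le_inv_pow_iff[of d p _ n] by auto

lemma cyl_proper_ball:
  assumes "d \<ge> 2" "k \<ge> 2" "p \<in> boundary d k" "n \<ge> 1"
  shows "proper_ball d k (cyl d k p n)"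
proof -
  have "is_ball d k (cyl d k p n)"
    unfolding is_ball_def cyl_eq_closed_ball[OF assms(1)] using assms(1,3)
    by (intro bexI[of _ p] exI[of _ "1 / real d ^ n"]) auto
  moreover define q where "q = p(0 := (if p 0 = 0 then 1 else 0))"
  have "q \<in> boundary d k" using assms unfolding q_def boundary_def by auto
  moreover have "q \<notin> cyl d k p n" using assms unfolding q_def cyl_def
    by (auto split: if_splits elim!: allE[of _ 0])
  ultimately show ?thesis unfolding proper_ball_def by blast
qed

lemma is_ball_cyl:
  assumes d2: "d \<ge> 2" and "is_ball d k B"
  obtains p n where "p \<in> boundary d k" "B = cyl d k p n"
proof -
  obtain \<xi> r where \<xi>: "\<xi> \<in> boundary d k" "r > 0"
    and B: "B = {\<eta>\<in>boundary d k. tdist d \<xi> \<eta> \<le> r}"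
    using assms(2) unfolding is_ball_def by blast
  have ex: "\<exists>n. 1 / real d ^ n \<le> r" using ex_inv_pow_less[OF d2 \<xi>(2)] less_imp_le by blast
  define n0 where "n0 = (LEAST n. 1 / real d ^ n \<le> r)"
  have n0: "1 / real d ^ n0 \<le> r" unfolding n0_def by (rule LeastI_ex[OF ex])
  txt \<open>Distances are powers of 1 / d, so the radius may be rounded down to one.\<close>
  have "tdist d \<xi> \<eta> \<le> r \<longleftrightarrow> tdist d \<xi> \<eta> \<le> 1 / real d ^ n0" for \<eta>
  proof (cases "\<xi> = \<eta>")
    case False
    then obtain N where N: "tdist d \<xi> \<eta> = 1 / real d ^ N" using tdist_eq_inv_pow by blast
    have "tdist d \<xi> \<eta> \<le> r \<Longrightarrow> n0 \<le> N" unfolding n0_def N by (rule Least_le)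
    then show ?thesis using N n0 inv_pow_le_iff[OF d2, of N n0] by auto
  qed (use \<xi>(2) in simp)
  then have "B = cyl d k \<xi> n0" unfolding B cyl_eq_closed_ball[OF d2] by auto
  then show ?thesis using \<xi> that by blast
qed

lemma proper_ball_cyl:
  assumes "d \<ge> 2" "proper_ball d k B"
  obtains p n where "p \<in> boundary d k" "n \<ge> 1" "B = cyl d k p n"
proof -
  obtain p n where "p \<in> boundary d k" "B = cyl d k p n"
    using is_ball_cyl[OF assms(1)] assms(2) unfolding proper_ball_def by blast
  moreover have "n \<noteq> 0" using assms(2) calculation unfolding proper_ball_def by auto
  ultimately show ?thesis by (intro that) auto
qed

lemma cyl_point_at_radius:
  assumes d2: "d \<ge> 2" and p: "p \<in> boundary d k" and n: "n \<ge> 1"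
  obtains x where "x \<in> cyl d k p n" "tdist d p x = 1 / real d ^ n"
proof
  define x where "x = p(n := (if p n = 0 then 1 else 0))"
  show x: "x \<in> cyl d k p n" using p n d2 unfolding x_def boundary_def cyl_def by auto
  have "\<not> tdist d p x < 1 / real d ^ n" using tdist_less_inv_pow_iff[OF d2] unfolding x_def by auto
  then show "tdist d p x = 1 / real d ^ n" using x unfolding cyl_eq_closed_ball[OF d2] by auto
qed

section \<open>Homotheties between cylinders\<close>

lemma homothety_cyl_ratio:
  assumes d2: "d \<ge> 2" and p: "p \<in> boundary d k" and n: "n \<ge> 1" and c: "c > 0"
    and hom: "\<forall>x\<in>cyl d k p n. \<forall>y\<in>cyl d k p n. tdist d (g x) (g y) = c * tdist d x y"
  obtains m where "c / real d ^ n = 1 / real d ^ m"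
proof -
  obtain x where x: "x \<in> cyl d k p n" "tdist d p x = 1 / real d ^ n"
    using cyl_point_at_radius[OF d2 p n] .
  have "tdist d (g p) (g x) = c / real d ^ n" using hom cyl_self[OF p] x by simp
  moreover have "g p \<noteq> g x" using calculation c d2 by auto
  ultimately show ?thesis using tdist_eq_inv_pow that by metis
qed

lemma inv_pow_ratio_shift:
  "c / real d ^ n = 1 / real d ^ m \<Longrightarrow> c / real d ^ (n + t) = 1 / real d ^ (m + t)"
  by (metis divide_divide_eq_left power_add)

lemma homothety_cyl_agree_iff:
  assumes d2: "d \<ge> 2"
    and hom: "\<forall>x\<in>cyl d k p n. \<forall>y\<in>cyl d k p n. tdist d (g x) (g y) = c * tdist d x y"
    and c: "c / real d ^ n = 1 / real d ^ m"
    and x: "x \<in> cyl d k p n" and y: "y \<in> cyl d k p n"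
  shows "(\<forall>i<m+j. g x i = g y i) \<longleftrightarrow> (\<forall>i<n+j. x i = y i)"
proof -
  have dpos: "real d > 0" using d2 by simp
  have "c = real d ^ n / real d ^ m" using c dpos by (simp add: field_simps)
  then have cpos: "c > 0" using dpos by simp
  have "1 / real d ^ (m + j) = c * (1 / real d ^ (n + j))" using inv_pow_ratio_shift[OF c] by simp
  then have "tdist d (g x) (g y) \<le> 1 / real d ^ (m + j) \<longleftrightarrow> tdist d x y \<le> 1 / real d ^ (n + j)"
    using hom x y cpos by (simp only: mult_le_cancel_left_pos)
  then show ?thesis using tdist_le_inv_pow_iff[OF d2] by blast
qed

lemma homothety_cyl_image_subset:
  assumes d2: "d \<ge> 2" and gbd: "g ` boundary d k \<subseteq> boundary d k" and p: "p \<in> boundary d k"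
    and hom: "\<forall>x\<in>cyl d k p n. \<forall>y\<in>cyl d k p n. tdist d (g x) (g y) = c * tdist d x y"
    and c: "c / real d ^ n = 1 / real d ^ m"
  shows "g ` cyl d k p n \<subseteq> cyl d k (g p) m"
proof
  fix y assume "y \<in> g ` cyl d k p n"
  then obtain x where x: "x \<in> cyl d k p n" "y = g x" by blast
  have "\<forall>i<m. g x i = g p i"
    using homothety_cyl_agree_iff[OF d2 hom c x(1) cyl_self[OF p], of 0] x(1)
    unfolding cyl_def by simp
  moreover have "g x \<in> boundary d k" using x(1) gbd cyl_subset_boundary by blast
  ultimately show "y \<in> cyl d k (g p) m" using x(2) unfolding cyl_def by simp
qed

definition graft :: "ray \<Rightarrow> nat \<Rightarrow> nat list \<Rightarrow> ray" where
  "graft p n w = (\<lambda>i. if i < n then p i else if i - n < length w then w ! (i - n) else 0)"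

definition words :: "nat \<Rightarrow> nat \<Rightarrow> nat list set" where
  "words d t = {w. set w \<subseteq> {..<d} \<and> length w = t}"

definition segment :: "ray \<Rightarrow> nat \<Rightarrow> nat \<Rightarrow> nat list" where
  "segment x n t = map (\<lambda>i. x (n + i)) [0..<t]"

lemma finite_words: "finite (words d t)"
  unfolding words_def by (rule finite_lists_length_eq) auto

lemma graft_in_cyl:
  assumes "d \<ge> 2" "p \<in> boundary d k" "n \<ge> 1" "w \<in> words d t"
  shows "graft p n w \<in> cyl d k p n"
proof -
  have "w ! (i - n) < d" if "i - n < length w" for i
    using assms(4) nth_mem[OF that] unfolding words_def by auto
  then show ?thesis using assms(1-3) unfolding graft_def cyl_def boundary_def by auto
qed

lemma segment_graft: "w \<in> words d t \<Longrightarrow> segment (graft p n w) n t = w"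
  unfolding segment_def graft_def words_def by (auto intro: nth_equalityI)

lemma segment_in_words:
  "x \<in> boundary d k \<Longrightarrow> n \<ge> 1 \<Longrightarrow> segment x n t \<in> words d t"
  unfolding segment_def words_def boundary_def by auto

lemma mem_cyl_graft_segment:
  "x \<in> cyl d k p n \<Longrightarrow> x \<in> cyl d k (graft p n (segment x n t)) (n + t)"
  unfolding cyl_def graft_def segment_def by auto

lemma cyl_agree_iff_segment_eq:
  assumes "x \<in> cyl d k q m" "y \<in> cyl d k q m"
  shows "(\<forall>i<m+j. x i = y i) \<longleftrightarrow> segment x m j = segment y m j"
proof -
  have below: "\<forall>i<m. x i = y i" using assms unfolding cyl_def by simp
  have "(\<forall>i<m+j. x i = y i) \<longleftrightarrow> (\<forall>i<j. x (m + i) = y (m + i))"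
  proof (intro iffI allI impI)
    fix i assume a: "\<forall>i<j. x (m + i) = y (m + i)" and i: "i < m + j"
    show "x i = y i"
    proof (cases "i < m")
      case False
      then show ?thesis using a[rule_format, of "i - m"] i by simp
    qed (use below in simp)
  qed simp
  then show ?thesis unfolding segment_def map_eq_conv by (auto simp: atLeast0LessThan)
qed

text \<open>Counting: at every depth the sub-cylinders of cyl d k p n are mapped injectively into the
  equally many sub-cylinders of cyl d k (g p) m.\<close>

lemma homothety_cyl_image_dense:
  assumes d2: "d \<ge> 2" and gbd: "g ` boundary d k \<subseteq> boundary d k"
    and p: "p \<in> boundary d k" and n: "n \<ge> 1" and m: "m \<ge> 1"
    and hom: "\<forall>x\<in>cyl d k p n. \<forall>y\<in>cyl d k p n. tdist d (g x) (g y) = c * tdist d x y"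
    and c: "c / real d ^ n = 1 / real d ^ m"
    and y: "y \<in> cyl d k (g p) m"
  shows "\<exists>x\<in>cyl d k p n. \<forall>i<m+j. g x i = y i"
proof -
  define \<Phi> where "\<Phi> w = segment (g (graft p n w)) m j" for w
  have graft: "graft p n w \<in> cyl d k p n" if "w \<in> words d j" for w
    using graft_in_cyl[OF d2 p n that] .
  have img: "g (graft p n w) \<in> cyl d k (g p) m" if "w \<in> words d j" for w
    using homothety_cyl_image_subset[OF d2 gbd p hom c] graft[OF that] by blast
  have "\<Phi> ` words d j \<subseteq> words d j"
    using img cyl_subset_boundary segment_in_words m unfolding \<Phi>_def by blast
  moreover have "inj_on \<Phi> (words d j)"
  proof
    fix w1 w2 assume w: "w1 \<in> words d j" "w2 \<in> words d j" and "\<Phi> w1 = \<Phi> w2"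
    then have "\<forall>i<m+j. g (graft p n w1) i = g (graft p n w2) i"
      using cyl_agree_iff_segment_eq[OF img img] unfolding \<Phi>_def by blast
    then have "\<forall>i<n+j. graft p n w1 i = graft p n w2 i"
      using homothety_cyl_agree_iff[OF d2 hom c graft graft] w by blast
    then show "w1 = w2"
      using cyl_agree_iff_segment_eq[OF graft graft] segment_graft w by metis
  qed
  ultimately have "\<Phi> ` words d j = words d j" by (intro endo_inj_surj finite_words)
  moreover have "segment y m j \<in> words d j"
    using y cyl_subset_boundary segment_in_words m by blast
  ultimately obtain w where w: "w \<in> words d j" "\<Phi> w = segment y m j" by (metis imageE)
  then have "\<forall>i<m+j. g (graft p n w) i = y i"
    using cyl_agree_iff_segment_eq[OF img[OF w(1)] y] unfolding \<Phi>_def by blast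
  then show ?thesis using graft[OF w(1)] by blast
qed

lemma homothety_cyl_image:
  assumes d2: "d \<ge> 2" and bij: "bij_betw g (boundary d k) (boundary d k)"
    and cont: "tcont_on d (boundary d k) (inv_into (boundary d k) g)"
    and p: "p \<in> boundary d k" and n: "n \<ge> 1" and m: "m \<ge> 1"
    and hom: "\<forall>x\<in>cyl d k p n. \<forall>y\<in>cyl d k p n. tdist d (g x) (g y) = c * tdist d x y"
    and c: "c / real d ^ n = 1 / real d ^ m"
  shows "g ` cyl d k p n = cyl d k (g p) m"
proof
  have gbd: "g ` boundary d k = boundary d k" using bij by (simp add: bij_betw_def)
  then show sub: "g ` cyl d k p n \<subseteq> cyl d k (g p) m"
    using homothety_cyl_image_subset[where g = g, OF d2 _ p hom c] by blast
  show "cyl d k (g p) m \<subseteq> g ` cyl d k p n"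
  proof
    fix y assume y: "y \<in> cyl d k (g p) m"
    define u where "u = inv_into (boundary d k) g"
    have yb: "y \<in> boundary d k" using y cyl_subset_boundary by blast
    then have "y \<in> g ` boundary d k" using gbd by simp
    then have uy: "u y \<in> boundary d k" "g (u y) = y"
      unfolding u_def by (rule inv_into_into, rule f_inv_into_f)
    txt \<open>u y is a limit of points of cyl p n, which is closed.\<close>
    have "1 / real d ^ n > 0" using d2 by simp
    then obtain \<delta> where \<delta>: "\<delta> > 0"
      "\<forall>z\<in>boundary d k. tdist d y z < \<delta> \<longrightarrow> tdist d (u y) (u z) < 1 / real d ^ n"
      using cont yb unfolding tcont_on_def u_def by blast
    obtain J where J: "1 / real d ^ J < \<delta>" using ex_inv_pow_less[OF d2 \<delta>(1)] by blast
    have "\<exists>x\<in>cyl d k p n. \<forall>i<m+J. g x i = y i"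
      using homothety_cyl_image_dense[of d g k p n m c y, OF d2 _ p n m hom c y] gbd by blast
    then obtain x where x: "x \<in> cyl d k p n" "\<forall>i<m+J. g x i = y i" ..
    have xb: "x \<in> boundary d k" using x(1) cyl_subset_boundary by blast
    have "tdist d y (g x) \<le> 1 / real d ^ (m + J)"
      using x(2) tdist_le_inv_pow_iff[OF d2] by metis
    also have "\<dots> \<le> 1 / real d ^ J" using inv_pow_le_iff[OF d2] by simp
    finally have "tdist d y (g x) < \<delta>" using J by linarith
    moreover have "g x \<in> boundary d k" using xb gbd by blast
    ultimately have close: "tdist d (u y) (u (g x)) < 1 / real d ^ n" using \<delta>(2) by blast
    have "u (g x) = x" unfolding u_def using bij xb by (simp add: bij_betw_def)
    then have "\<forall>i<Suc n. u y i = x i" using close tdist_less_inv_pow_iff[OF d2] by simp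
    then have "u y \<in> cyl d k p n" using x(1) uy(1) unfolding cyl_def by auto
    then show "y \<in> g ` cyl d k p n" using uy(2) by force
  qed
qed

section \<open>Partitions into cylinders\<close>

definition cyl_partition :: "nat \<Rightarrow> nat \<Rightarrow> ray set set \<Rightarrow> bool" where
  "cyl_partition d k P \<longleftrightarrow> finite P \<and>
     (\<forall>D1\<in>P. \<forall>D2\<in>P. D1 \<noteq> D2 \<longrightarrow> D1 \<inter> D2 = {}) \<and> \<Union>P = boundary d k \<and>
     (\<forall>D\<in>P. \<exists>q\<in>boundary d k. \<exists>n\<ge>1. D = cyl d k q n)"

lemma cyl_partitionD:
  assumes "cyl_partition d k P"
  shows "finite P" "\<And>D1 D2. D1 \<in> P \<Longrightarrow> D2 \<in> P \<Longrightarrow> D1 \<noteq> D2 \<Longrightarrow> D1 \<inter> D2 = {}"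
    "\<Union>P = boundary d k" "\<forall>D\<in>P. \<exists>q\<in>boundary d k. \<exists>n\<ge>1. D = cyl d k q n"
  using assms unfolding cyl_partition_def by auto

lemma cyl_partition_choice:
  assumes "cyl_partition d k P"
  obtains p n where "\<forall>C\<in>P. p C \<in> boundary d k \<and> n C \<ge> 1 \<and> C = cyl d k (p C) (n C)"
proof -
  from bchoice[OF cyl_partitionD(4)[OF assms, unfolded Bex_def]]
  obtain p where p: "\<forall>C\<in>P. p C \<in> boundary d k \<and> (\<exists>n\<ge>1. C = cyl d k (p C) n)" ..
  then have "\<forall>C\<in>P. \<exists>n. n \<ge> 1 \<and> C = cyl d k (p C) n" by simp
  from bchoice[OF this] obtain n where "\<forall>C\<in>P. n C \<ge> 1 \<and> C = cyl d k (p C) (n C)" ..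
  with p have "\<forall>C\<in>P. p C \<in> boundary d k \<and> n C \<ge> 1 \<and> C = cyl d k (p C) (n C)" by simp
  then show ?thesis by (rule that)
qed

lemma almost_aut_partition:
  assumes d2: "d \<ge> 2" and g: "almost_aut d k g"
  obtains P where "cyl_partition d k P" "\<forall>D\<in>P. homothety_on d D g"
proof -
  obtain P where P: "finite P" "\<forall>B\<in>P. proper_ball d k B"
    "\<forall>B1\<in>P. \<forall>B2\<in>P. B1 \<noteq> B2 \<longrightarrow> B1 \<inter> B2 = {}" "\<Union>P = boundary d k"
    "\<forall>B\<in>P. homothety_on d B g"
    using g unfolding almost_aut_def by blast
  have "\<exists>q\<in>boundary d k. \<exists>n\<ge>1. B = cyl d k q n" if "B \<in> P" for B
  proof -
    have "proper_ball d k B" using P(2) that by blast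
    then obtain q n where "q \<in> boundary d k" "n \<ge> 1" "B = cyl d k q n"
      by (rule proper_ball_cyl[OF d2])
    then show ?thesis by blast
  qed
  then have "cyl_partition d k P" using P(1,3,4) unfolding cyl_partition_def by simp
  from this P(5) show ?thesis by (rule that)
qed

lemma almost_autI:
  assumes d2: "d \<ge> 2" and k2: "k \<ge> 2" and hom: "homeomorphism_bd d k g"
    and out: "\<forall>x. x \<notin> boundary d k \<longrightarrow> g x = x"
    and P: "cyl_partition d k P" and homP: "\<forall>D\<in>P. homothety_on d D g"
  shows "almost_aut d k g"
proof -
  have "proper_ball d k D" if D: "D \<in> P" for D
  proof -
    obtain q n where "q \<in> boundary d k" "n \<ge> 1" "D = cyl d k q n"
      using cyl_partitionD(4) P D by blast
    then show ?thesis using cyl_proper_ball[OF d2 k2] by simp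
  qed
  moreover have "finite P" "\<Union>P = boundary d k" "\<forall>B1\<in>P. \<forall>B2\<in>P. B1 \<noteq> B2 \<longrightarrow> B1 \<inter> B2 = {}"
    using P unfolding cyl_partition_def by simp_all
  ultimately show ?thesis
    unfolding almost_aut_def using hom out homP by (intro conjI exI[of _ P]) auto
qed

lemma cyl_eq_Union_graft:
  assumes d2: "d \<ge> 2" and p: "p \<in> boundary d k" and n: "n \<ge> 1"
  shows "cyl d k p n = (\<Union>w\<in>words d t. cyl d k (graft p n w) (n + t))"
proof
  show "cyl d k p n \<subseteq> (\<Union>w\<in>words d t. cyl d k (graft p n w) (n + t))"
  proof
    fix x assume x: "x \<in> cyl d k p n"
    then have "segment x n t \<in> words d t"
      using segment_in_words[OF _ n] cyl_subset_boundary by blast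
    then show "x \<in> (\<Union>w\<in>words d t. cyl d k (graft p n w) (n + t))"
      using mem_cyl_graft_segment[OF x] by blast
  qed
  have "cyl d k (graft p n w) (n + t) \<subseteq> cyl d k p n" if "w \<in> words d t" for w
    using cyl_antimono[of n "n + t" d k "graft p n w"]
      cyl_eq_of_mem[OF graft_in_cyl[OF d2 p n that]]
    by simp
  then show "(\<Union>w\<in>words d t. cyl d k (graft p n w) (n + t)) \<subseteq> cyl d k p n" by blast
qed

lemma cyl_partition_refine:
  assumes d2: "d \<ge> 2" and P: "cyl_partition d k P"
  obtains P' where "cyl_partition d k P'"
    "\<forall>D\<in>P'. \<exists>C\<in>P. \<exists>q\<in>C. \<exists>n\<ge>1. C = cyl d k q n \<and> D = cyl d k q (n + t)"
proof -
  obtain p n where pn: "\<forall>C\<in>P. p C \<in> boundary d k \<and> n C \<ge> 1 \<and> C = cyl d k (p C) (n C)"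
    using cyl_partition_choice[OF P] .
  define sub where "sub C w = cyl d k (graft (p C) (n C) w) (n C + t)" for C w
  define P' where "P' = (\<Union>C\<in>P. sub C ` words d t)"
  have C: "p C \<in> boundary d k" "n C \<ge> 1" "C = cyl d k (p C) (n C)" if "C \<in> P" for C
    using pn that by simp_all
  have C_Union: "C = (\<Union>w\<in>words d t. sub C w)" if "C \<in> P" for C
    using cyl_eq_Union_graft[OF d2 C(1,2)[OF that]] C(3)[OF that] unfolding sub_def by simp
  have piece: "graft (p C) (n C) w \<in> C" "C = cyl d k (graft (p C) (n C) w) (n C)"
    if "C \<in> P" "w \<in> words d t" for C w
  proof -
    have g: "graft (p C) (n C) w \<in> cyl d k (p C) (n C)"
      using graft_in_cyl[OF d2 C(1,2)[OF that(1)] that(2)] .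
    then show "graft (p C) (n C) w \<in> C" using C(3)[OF that(1)] by simp
    show "C = cyl d k (graft (p C) (n C) w) (n C)"
      using C(3)[OF that(1)] cyl_eq_of_mem[OF g] by simp
  qed
  have subC: "sub C w \<subseteq> C" if "C \<in> P" "w \<in> words d t" for C w
    unfolding sub_def
    using cyl_antimono[of "n C" "n C + t" d k "graft (p C) (n C) w"] piece(2)[OF that]
    by simp
  have "\<Union>P' = (\<Union>C\<in>P. \<Union>w\<in>words d t. sub C w)" unfolding P'_def by blast
  also have "\<dots> = (\<Union>C\<in>P. C)" using C_Union by (intro SUP_cong) auto
  finally have union: "\<Union>P' = boundary d k" using cyl_partitionD(3)[OF P] by simp
  have disj: "D1 \<inter> D2 = {}" if D1: "D1 \<in> P'" and D2: "D2 \<in> P'" and ne: "D1 \<noteq> D2" for D1 D2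
  proof (rule ccontr)
    obtain C1 w1 where C1: "C1 \<in> P" "w1 \<in> words d t" "D1 = sub C1 w1"
      using D1 unfolding P'_def by blast
    obtain C2 w2 where C2: "C2 \<in> P" "w2 \<in> words d t" "D2 = sub C2 w2"
      using D2 unfolding P'_def by blast
    assume "D1 \<inter> D2 \<noteq> {}"
    then obtain x where x: "x \<in> D1" "x \<in> D2" by blast
    then have "x \<in> C1" "x \<in> C2" using C1(3) C2(3) subC[OF C1(1,2)] subC[OF C2(1,2)] by auto
    then have "C1 = C2" using cyl_partitionD(2)[OF P C1(1) C2(1)] by blast
    moreover have "D1 = cyl d k x (n C1 + t)" "D2 = cyl d k x (n C2 + t)"
      using x C1(3) C2(3) unfolding sub_def by (simp_all add: cyl_eq_of_mem)
    ultimately show False using ne by simp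
  qed
  have fin: "finite P'" unfolding P'_def using cyl_partitionD(1)[OF P] finite_words by blast
  have refines: "\<exists>C\<in>P. \<exists>q\<in>C. \<exists>m\<ge>1. C = cyl d k q m \<and> D = cyl d k q (m + t)"
    and is_cyl: "\<exists>q\<in>boundary d k. \<exists>m\<ge>1. D = cyl d k q m" if D: "D \<in> P'" for D
  proof -
    obtain C w where C: "C \<in> P" "w \<in> words d t" "D = sub C w" using D unfolding P'_def by blast
    then show "\<exists>C\<in>P. \<exists>q\<in>C. \<exists>m\<ge>1. C = cyl d k q m \<and> D = cyl d k q (m + t)"
      using piece[OF C(1,2)] pn unfolding sub_def
      by (intro bexI[of _ C] bexI[of _ "graft (p C) (n C) w"] exI[of _ "n C"] conjI) auto
    have "graft (p C) (n C) w \<in> boundary d k"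
      using piece(1)[OF C(1,2)] C(1) cyl_partitionD(3)[OF P] by blast
    then show "\<exists>q\<in>boundary d k. \<exists>m\<ge>1. D = cyl d k q m"
      using C(1,3) pn unfolding sub_def
      by (intro bexI[of _ "graft (p C) (n C) w"] exI[of _ "n C + t"]) auto
  qed
  have "cyl_partition d k P'"
    unfolding cyl_partition_def by (intro conjI ballI impI disj) (use fin union is_cyl in auto)
  with refines show ?thesis by (intro that) auto
qed

lemma almost_aut_fine_partition:
  assumes d2: "d \<ge> 2" and g: "almost_aut d k g"
  obtains P where "cyl_partition d k P"
    "\<forall>D\<in>P. homothety_on d D g \<and> (\<exists>q\<in>boundary d k. \<exists>m\<ge>L. g ` D = cyl d k q m)"
proof -
  have bij: "bij_betw g (boundary d k) (boundary d k)"
    and cont: "tcont_on d (boundary d k) (inv_into (boundary d k) g)"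
    using g unfolding almost_aut_def homeomorphism_bd_def by blast+
  obtain P where P: "cyl_partition d k P" "\<forall>D\<in>P. homothety_on d D g"
    using almost_aut_partition[OF d2 g] .
  obtain P' where P': "cyl_partition d k P'"
    "\<forall>D\<in>P'. \<exists>C\<in>P. \<exists>q\<in>C. \<exists>n\<ge>1. C = cyl d k q n \<and> D = cyl d k q (n + Suc L)"
    using cyl_partition_refine[OF d2 P(1)] .
  have "\<forall>D\<in>P'. homothety_on d D g \<and> (\<exists>q\<in>boundary d k. \<exists>m\<ge>L. g ` D = cyl d k q m)"
  proof
    fix D assume D: "D \<in> P'"
    obtain C q n where C: "C \<in> P" "q \<in> C" "n \<ge> 1" "C = cyl d k q n" "D = cyl d k q (n + Suc L)"
      using P'(2) D by metis
    have q: "q \<in> boundary d k" using C(2,4) cyl_subset_boundary by blast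
    obtain c where c: "c > 0" and homC: "\<forall>x\<in>C. \<forall>y\<in>C. tdist d (g x) (g y) = c * tdist d x y"
      using P(2) C(1) unfolding homothety_on_def by blast
    obtain m where m: "c / real d ^ n = 1 / real d ^ m"
      using homothety_cyl_ratio[OF d2 q C(3) c] homC C(4) by blast
    have "D \<subseteq> C" unfolding C(4,5) by (rule cyl_antimono) simp
    then have homD: "\<forall>x\<in>D. \<forall>y\<in>D. tdist d (g x) (g y) = c * tdist d x y" using homC by blast
    have "c / real d ^ (n + Suc L) = 1 / real d ^ (m + Suc L)" using m by (rule inv_pow_ratio_shift)
    then have "g ` D = cyl d k (g q) (m + Suc L)"
      unfolding C(5) using homD[unfolded C(5)] by (intro homothety_cyl_image[OF d2 bij cont q]) auto
    moreover have "g q \<in> boundary d k" using q bij by (auto simp: bij_betw_def)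
    moreover have "homothety_on d D g" using homD c unfolding homothety_on_def by blast
    ultimately show "homothety_on d D g \<and> (\<exists>q\<in>boundary d k. \<exists>m\<ge>L. g ` D = cyl d k q m)"
      by (intro conjI bexI[of _ "g q"] exI[of _ "m + Suc L"]) auto
  qed
  with P'(1) show ?thesis by (rule that)
qed

section \<open>The group of almost automorphisms\<close>

lemma tcont_cong: "tcont_on d S f \<Longrightarrow> (\<And>x. x \<in> S \<Longrightarrow> f' x = f x) \<Longrightarrow> tcont_on d S f'"
  unfolding tcont_on_def by simp

lemma tcont_id: "tcont_on d S id"
  unfolding tcont_on_def by auto

lemma tcont_comp:
  assumes f: "tcont_on d S f" and g: "tcont_on d S g" and fS: "f ` S \<subseteq> S"
  shows "tcont_on d S (g \<circ> f)"
  unfolding tcont_on_def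
proof (intro ballI allI impI)
  fix x e assume x: "x \<in> S" and e: "(e::real) > 0"
  obtain \<delta>1 where \<delta>1: "\<delta>1 > 0" "\<forall>y\<in>S. tdist d (f x) y < \<delta>1 \<longrightarrow> tdist d (g (f x)) (g y) < e"
    using g x e fS unfolding tcont_on_def by blast
  obtain \<delta> where \<delta>: "\<delta> > 0" "\<forall>y\<in>S. tdist d x y < \<delta> \<longrightarrow> tdist d (f x) (f y) < \<delta>1"
    using f x \<delta>1(1) unfolding tcont_on_def by blast
  have "tdist d ((g \<circ> f) x) ((g \<circ> f) y) < e" if "y \<in> S" "tdist d x y < \<delta>" for y
    using \<delta>(2) \<delta>1(2) fS that by auto
  then show "\<exists>\<delta>>0. \<forall>y\<in>S. tdist d x y < \<delta> \<longrightarrow> tdist d ((g \<circ> f) x) ((g \<circ> f) y) < e"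
    using \<delta>(1) by blast
qed

lemma homothety_on_subset: "homothety_on d D f \<Longrightarrow> D' \<subseteq> D \<Longrightarrow> homothety_on d D' f"
  unfolding homothety_on_def by blast

lemma homothety_on_comp:
  assumes "homothety_on d D f" "homothety_on d (f ` D) g"
  shows "homothety_on d D (g \<circ> f)"
proof -
  obtain a b where "a > 0" "b > 0" "\<forall>x\<in>D. \<forall>y\<in>D. tdist d (f x) (f y) = a * tdist d x y"
    "\<forall>x\<in>f ` D. \<forall>y\<in>f ` D. tdist d (g x) (g y) = b * tdist d x y"
    using assms unfolding homothety_on_def by blast
  then show ?thesis unfolding homothety_on_def by (intro exI[of _ "b * a"]) auto
qed

lemma homothety_on_inverse:
  assumes "homothety_on d D f" "\<And>x. x \<in> D \<Longrightarrow> f' (f x) = x"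
  shows "homothety_on d (f ` D) f'"
proof -
  obtain c where "c > 0" "\<forall>x\<in>D. \<forall>y\<in>D. tdist d (f x) (f y) = c * tdist d x y"
    using assms(1) unfolding homothety_on_def by blast
  then show ?thesis using assms(2) unfolding homothety_on_def by (intro exI[of _ "1 / c"]) auto
qed

lemma inv_into_eq_inv:
  assumes "bij f" "f ` A = A" "x \<in> A"
  shows "inv_into A f x = inv' f x"
proof -
  obtain a where a: "a \<in> A" "x = f a" using assms(2,3) by blast
  have "inj f" using assms(1) by (rule bij_is_inj)
  moreover from this have "inj_on f A" by (rule inj_on_subset) simp
  ultimately show ?thesis using a by (simp add: inv_into_f_f)
qed

lemma homeomorphism_bd_iff:
  assumes "bij g" "g ` boundary d k = boundary d k"
  shows "homeomorphism_bd d k g \<longleftrightarrow>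
    tcont_on d (boundary d k) g \<and> tcont_on d (boundary d k) (inv' g)"
proof -
  have "bij_betw g (boundary d k) (boundary d k)" using assms bij_betw_subset by blast
  moreover have "tcont_on d (boundary d k) (inv_into (boundary d k) g) \<longleftrightarrow>
      tcont_on d (boundary d k) (inv' g)"
    using tcont_cong inv_into_eq_inv[OF assms] by metis
  ultimately show ?thesis unfolding homeomorphism_bd_def by blast
qed

lemma almost_aut_bij:
  assumes "almost_aut d k g"
  shows "bij g" "g ` boundary d k = boundary d k"
proof -
  have bd: "bij_betw g (boundary d k) (boundary d k)" and out: "\<And>x. x \<notin> boundary d k \<Longrightarrow> g x = x"
    using assms unfolding almost_aut_def homeomorphism_bd_def by blast+
  then show "g ` boundary d k = boundary d k" by (simp add: bij_betw_def)
  have "bij_betw g (- boundary d k) (- boundary d k)"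
    using bij_betw_cong[of "- boundary d k" g id] out by simp
  from bij_betw_combine[OF bd this] show "bij g" by simp
qed

lemma almost_aut_tcont:
  assumes "almost_aut d k g"
  shows "tcont_on d (boundary d k) g" "tcont_on d (boundary d k) (inv' g)"
  using assms homeomorphism_bd_iff[OF almost_aut_bij[OF assms]]
  unfolding almost_aut_def by blast+

lemma almost_aut_id:
  assumes d2: "d \<ge> 2" and k2: "k \<ge> 2"
  shows "almost_aut d k id"
proof (rule almost_autI[OF d2 k2])
  show "homeomorphism_bd d k id" using homeomorphism_bd_iff[of id] tcont_id by (simp add: inv_id)
  define root :: "nat \<Rightarrow> ray" where "root a = (\<lambda>i. if i = 0 then a else 0)" for a
  have root: "root a \<in> boundary d k" if "a < k" for a
    using that d2 unfolding root_def boundary_def by auto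
  define P where "P = (\<lambda>a. cyl d k (root a) 1) ` {..<k}"
  have "\<Union>P = boundary d k"
  proof
    show "boundary d k \<subseteq> \<Union>P"
    proof
      fix x assume x: "x \<in> boundary d k"
      then have "x \<in> cyl d k (root (x 0)) 1" unfolding cyl_def root_def by auto
      then show "x \<in> \<Union>P" using x unfolding P_def boundary_def by auto
    qed
  qed (auto simp: P_def cyl_def)
  moreover have "\<exists>q\<in>boundary d k. \<exists>n\<ge>1. D = cyl d k q n" if D: "D \<in> P" for D
  proof -
    obtain a where "a < k" "D = cyl d k (root a) 1" using D unfolding P_def by blast
    then show ?thesis using root by blast
  qed
  moreover have "\<forall>D1\<in>P. \<forall>D2\<in>P. D1 \<noteq> D2 \<longrightarrow> D1 \<inter> D2 = {}"
    unfolding P_def by (auto simp: cyl_def root_def)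
  ultimately show "cyl_partition d k P" unfolding cyl_partition_def P_def by auto
  show "\<forall>D\<in>P. homothety_on d D id" unfolding homothety_on_def by (auto intro: exI[of _ 1])
qed simp

lemma cyl_partition_image:
  assumes g: "inj g" "g ` boundary d k = boundary d k" and P: "cyl_partition d k P"
    and cyl: "\<forall>D\<in>P. \<exists>q\<in>boundary d k. \<exists>m\<ge>1. g ` D = cyl d k q m"
  shows "cyl_partition d k ((\<lambda>D. g ` D) ` P)"
  unfolding cyl_partition_def
proof (intro conjI ballI impI)
  show "finite ((\<lambda>D. g ` D) ` P)" using cyl_partitionD(1)[OF P] by simp
  show "\<Union>((\<lambda>D. g ` D) ` P) = boundary d k"
    using cyl_partitionD(3)[OF P] g(2) by (simp add: image_Union[symmetric])
  fix B1 B2 assume "B1 \<in> (\<lambda>D. g ` D) ` P" "B2 \<in> (\<lambda>D. g ` D) ` P" "B1 \<noteq> B2"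
  then obtain D1 D2 where "D1 \<in> P" "D2 \<in> P" "D1 \<noteq> D2" "B1 = g ` D1" "B2 = g ` D2" by blast
  moreover from this have "D1 \<inter> D2 = {}" using cyl_partitionD(2)[OF P] by blast
  ultimately show "B1 \<inter> B2 = {}" using g(1) by (simp add: image_Int[symmetric])
next
  fix B assume "B \<in> (\<lambda>D. g ` D) ` P"
  then obtain D where D: "D \<in> P" "B = g ` D" by blast
  have "\<exists>q\<in>boundary d k. \<exists>n\<ge>1. g ` D = cyl d k q n" using cyl D(1) by blast
  then show "\<exists>q\<in>boundary d k. \<exists>n\<ge>1. B = cyl d k q n" using D(2) by simp
qed

lemma almost_aut_inv:
  assumes d2: "d \<ge> 2" and k2: "k \<ge> 2" and g: "almost_aut d k g"
  shows "almost_aut d k (inv' g)"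
proof -
  note bij = almost_aut_bij[OF g]
  have ig: "inv' g (g x) = x" for x using bij(1) by (simp add: bij_is_inj)
  have img: "inv' g ` boundary d k = boundary d k"
    using bij by (metis bij_is_inj image_inv_f_f)
  obtain P where P: "cyl_partition d k P"
    "\<forall>D\<in>P. homothety_on d D g \<and> (\<exists>q\<in>boundary d k. \<exists>m\<ge>1. g ` D = cyl d k q m)"
    using almost_aut_fine_partition[OF d2 g] .
  show ?thesis
  proof (rule almost_autI[OF d2 k2])
    show "homeomorphism_bd d k (inv' g)"
      using homeomorphism_bd_iff[OF bij_imp_bij_inv[OF bij(1)] img] almost_aut_tcont[OF g]
      by (simp add: inv_inv_eq bij(1))
    show "\<forall>x. x \<notin> boundary d k \<longrightarrow> inv' g x = x"
      using g bij_is_inj[OF bij(1)] unfolding almost_aut_def by (simp add: inv_f_eq)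
    show "cyl_partition d k ((\<lambda>D. g ` D) ` P)"
      using cyl_partition_image[OF bij_is_inj[OF bij(1)] bij(2) P(1)] P(2) by blast
    show "\<forall>B\<in>(\<lambda>D. g ` D) ` P. homothety_on d B (inv' g)"
    proof
      fix B assume "B \<in> (\<lambda>D. g ` D) ` P"
      then obtain D where D: "D \<in> P" "B = g ` D" by blast
      have "homothety_on d D g" using P(2) D(1) by blast
      then show "homothety_on d B (inv' g)" using homothety_on_inverse ig D(2) by blast
    qed
  qed
qed

lemma almost_aut_locally_homothetic:
  assumes d2: "d \<ge> 2" and g: "almost_aut d k g"
  obtains L where "\<forall>x\<in>boundary d k. homothety_on d (cyl d k x L) g"
proof -
  obtain P where P: "cyl_partition d k P" "\<forall>D\<in>P. homothety_on d D g"
    using almost_aut_partition[OF d2 g] .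
  obtain p lvl where pl: "\<forall>C\<in>P. p C \<in> boundary d k \<and> lvl C \<ge> 1 \<and> C = cyl d k (p C) (lvl C)"
    using cyl_partition_choice[OF P(1)] .
  define L where "L = Max (lvl ` P)"
  have "homothety_on d (cyl d k x L) g" if x: "x \<in> boundary d k" for x
  proof -
    obtain C where C: "C \<in> P" "x \<in> C" using x cyl_partitionD(3)[OF P(1)] by blast
    have "C = cyl d k x (lvl C)" using pl C cyl_eq_of_mem by metis
    moreover have "lvl C \<le> L" unfolding L_def using cyl_partitionD(1)[OF P(1)] C(1) by simp
    ultimately have "cyl d k x L \<subseteq> C" using cyl_antimono by metis
    then show ?thesis using P(2) C(1) homothety_on_subset by blast
  qed
  then show ?thesis using that by blast
qed

lemma almost_aut_comp:
  assumes d2: "d \<ge> 2" and k2: "k \<ge> 2" and g: "almost_aut d k g" and h: "almost_aut d k h"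
  shows "almost_aut d k (g \<circ> h)"
proof -
  note bg = almost_aut_bij[OF g] and bh = almost_aut_bij[OF h]
  have bij: "bij (g \<circ> h)" "(g \<circ> h) ` boundary d k = boundary d k"
    using bij_comp[OF bh(1) bg(1)] by (simp_all only: image_comp[symmetric] bh(2) bg(2))
  obtain L where L: "\<forall>x\<in>boundary d k. homothety_on d (cyl d k x L) g"
    using almost_aut_locally_homothetic[OF d2 g] .
  obtain P where P: "cyl_partition d k P"
    "\<forall>D\<in>P. homothety_on d D h \<and> (\<exists>q\<in>boundary d k. \<exists>m\<ge>L. h ` D = cyl d k q m)"
    using almost_aut_fine_partition[OF d2 h] .
  show ?thesis
  proof (rule almost_autI[OF d2 k2 _ _ P(1)])
    have "inv' g ` boundary d k = boundary d k"
      using almost_aut_bij(2)[OF almost_aut_inv[OF d2 k2 g]] .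
    then have "tcont_on d (boundary d k) (inv' h \<circ> inv' g)"
      using tcont_comp[OF almost_aut_tcont(2)[OF g] almost_aut_tcont(2)[OF h]] by simp
    moreover have "tcont_on d (boundary d k) (g \<circ> h)"
      using tcont_comp[OF almost_aut_tcont(1)[OF h] almost_aut_tcont(1)[OF g]] bh(2) by simp
    ultimately show "homeomorphism_bd d k (g \<circ> h)"
      using homeomorphism_bd_iff[OF bij] by (simp add: o_inv_distrib bg(1) bh(1))
    show "\<forall>x. x \<notin> boundary d k \<longrightarrow> (g \<circ> h) x = x"
      using g h unfolding almost_aut_def by simp
    show "\<forall>D\<in>P. homothety_on d D (g \<circ> h)"
    proof
      fix D assume "D \<in> P"
      then have hD: "homothety_on d D h" and "\<exists>q\<in>boundary d k. \<exists>m\<ge>L. h ` D = cyl d k q m"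
        using P(2) by simp_all
      then obtain q m where D: "q \<in> boundary d k" "m \<ge> L" "h ` D = cyl d k q m" by blast
      then have "h ` D \<subseteq> cyl d k q L" using cyl_antimono by simp
      then have "homothety_on d (h ` D) g" using L D(1) homothety_on_subset by blast
      then show "homothety_on d D (g \<circ> h)" using hD homothety_on_comp by blast
    qed
  qed
qed

lemma AAut_carrier: "g \<in> carrier (AAut d k) \<longleftrightarrow> almost_aut d k g"
  by (simp add: AAut_def)

lemma AAut_mult: "x \<otimes>\<^bsub>AAut d k\<^esub> y = x \<circ> y"
  by (simp add: AAut_def)

lemma AAut_one: "\<one>\<^bsub>AAut d k\<^esub> = id"
  by (simp add: AAut_def)

lemma AAut_pow: "x [^]\<^bsub>AAut d k\<^esub> (j::nat) = x ^^ j"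
  by (induction j) (simp_all add: AAut_mult AAut_one funpow_Suc_right del: funpow.simps(2))

lemma AAut_group:
  assumes d2: "d \<ge> 2" and k2: "k \<ge> 2"
  shows "group (AAut d k)"
proof (rule groupI)
  fix x assume x: "x \<in> carrier (AAut d k)"
  then have "inv' x \<circ> x = id" using almost_aut_bij[of d k x] by (simp add: AAut_carrier bij_is_inj)
  then show "\<exists>y\<in>carrier (AAut d k). y \<otimes>\<^bsub>AAut d k\<^esub> x = \<one>\<^bsub>AAut d k\<^esub>"
    using almost_aut_inv[OF d2 k2] x by (auto simp: AAut_carrier AAut_mult AAut_one)
qed (auto simp: AAut_carrier AAut_mult AAut_one comp_assoc almost_aut_comp[OF d2 k2]
  almost_aut_id[OF d2 k2])

context
  fixes d k :: nat
  assumes d2: "d \<ge> 2" and k2: "k \<ge> 2"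
begin

interpretation AA: group "AAut d k" by (rule AAut_group[OF d2 k2])

lemma AAut_bij: "g \<in> carrier (AAut d k) \<Longrightarrow> bij g"
  by (simp add: AAut_carrier almost_aut_bij)

lemma AAut_inv: "g \<in> carrier (AAut d k) \<Longrightarrow> inv\<^bsub>AAut d k\<^esub> g = inv' g"
  using AA.inv_equality[of "inv' g" g] almost_aut_inv[OF d2 k2] AAut_bij[of g]
  by (simp add: AAut_carrier AAut_mult AAut_one bij_is_inj)

end

section \<open>Translations\<close>

lemma contraction_displacement:
  assumes d2: "d \<ge> 2" and fB: "f ` B \<subseteq> B"
    and hom: "\<forall>x\<in>B. \<forall>y\<in>B. tdist d (f x) (f y) = c * tdist d x y"
    and c: "0 \<le> c" "c < 1" and p: "p \<in> B" and y: "y \<in> B"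
    and close: "tdist d p y < tdist d p (f p)" and j: "j \<ge> 1"
  shows "tdist d p (f p) \<le> tdist d p ((f ^^ j) y)"
proof -
  define \<delta> where "\<delta> = tdist d p (f p)"
  have \<delta>: "\<delta> > 0" using close tdist_nonneg[of d p y] unfolding \<delta>_def by linarith
  have iter_in: "(f ^^ i) x \<in> B" if "x \<in> B" for x i
    using that fB by (induction i) auto
  have iter_hom: "tdist d ((f ^^ i) x) ((f ^^ i) x') = c ^ i * tdist d x x'"
    if "x \<in> B" "x' \<in> B" for x x' i
    using that by (induction i) (simp_all add: hom iter_in)
  have orbit: "tdist d (f p) ((f ^^ i) p) \<le> c * \<delta>" if "i \<ge> 1" for i
    using that
  proof (induction i rule: dec_induct)
    case (step i)
    have "tdist d ((f ^^ i) p) ((f ^^ i) (f p)) = c ^ i * \<delta>"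
      using iter_hom p fB unfolding \<delta>_def by blast
    also have "\<dots> \<le> c * \<delta>" using power_decreasing[OF step(1), of c] c \<delta> by simp
    finally have "tdist d ((f ^^ i) p) ((f ^^ Suc i) p) \<le> c * \<delta>"
      by (simp add: funpow_Suc_right del: funpow.simps(2))
    then show ?case
      using tdist_ultrametric[OF d2, where x = "f p" and y = "(f ^^ i) p" and z = "(f ^^ Suc i) p"]
        step(3) by simp
  qed (use c \<delta> in simp)
  txt \<open>The orbit of p stays far from p, and the orbit of y shadows it closely.\<close>
  have "c * \<delta> < \<delta>" using c \<delta> by simp
  then have "tdist d ((f ^^ j) p) (f p) < \<delta>"
    using orbit[OF j] tdist_sym[of d "f p" "(f ^^ j) p"] by linarith
  then have far: "\<delta> \<le> tdist d p ((f ^^ j) p)"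
    using tdist_ultrametric[OF d2, where x = p and y = "(f ^^ j) p" and z = "f p"]
    unfolding \<delta>_def by linarith
  have "tdist d ((f ^^ j) y) ((f ^^ j) p) = c ^ j * tdist d y p" using iter_hom y p by blast
  also have "\<dots> \<le> tdist d y p"
    using mult_right_mono[OF power_le_one[OF c(1) less_imp_le[OF c(2)]] tdist_nonneg] by simp
  finally have "tdist d ((f ^^ j) y) ((f ^^ j) p) < \<delta>"
    using close tdist_sym[of d y p] unfolding \<delta>_def by linarith
  then show ?thesis
    using far tdist_ultrametric[OF d2, where x = p and y = "(f ^^ j) y" and z = "(f ^^ j) p"]
    unfolding \<delta>_def by linarith
qed

lemma strict_self_homothety_ratio_less_1:
  assumes d2: "d \<ge> 2" and f: "almost_aut d k f" and p: "p \<in> boundary d k" and n: "n \<ge> 1"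
    and c: "c > 0" and hom: "\<forall>x\<in>cyl d k p n. \<forall>y\<in>cyl d k p n. tdist d (f x) (f y) = c * tdist d x y"
    and strict: "f ` cyl d k p n \<subset> cyl d k p n"
  shows "c < 1"
proof -
  obtain m where m: "c / real d ^ n = 1 / real d ^ m"
    using homothety_cyl_ratio[OF d2 p n c hom] .
  obtain x where x: "x \<in> cyl d k p n" "tdist d p x = 1 / real d ^ n"
    using cyl_point_at_radius[OF d2 p n] .
  have "f p \<in> cyl d k p n" "f x \<in> cyl d k p n" using strict x(1) cyl_self[OF p] by blast+
  then have "tdist d (f p) (f x) \<le> 1 / real d ^ n"
    unfolding cyl_def using tdist_le_inv_pow_iff[OF d2] by simp
  moreover have "tdist d (f p) (f x) = 1 / real d ^ m" using hom x cyl_self[OF p] m by simp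
  ultimately have "n \<le> m" using inv_pow_le_iff[OF d2] by simp
  moreover have "m \<noteq> n"
  proof
    assume "m = n"
    have "f ` cyl d k p n = cyl d k (f p) m"
      using f p n m hom \<open>m = n\<close> homothety_cyl_image[OF d2, of f k p n m c]
      unfolding almost_aut_def homeomorphism_bd_def by blast
    also have "\<dots> = cyl d k p n" using \<open>m = n\<close> \<open>f p \<in> cyl d k p n\<close> cyl_eq_of_mem by metis
    finally show False using strict by simp
  qed
  ultimately have "real d ^ n < real d ^ m" using d2 by simp
  moreover have "c = real d ^ n / real d ^ m" using m d2 by (simp add: field_simps)
  ultimately show ?thesis using d2 by simp
qed

lemma contraction_wandering_cyl:
  assumes d2: "d \<ge> 2" and fB: "f ` cyl d k p0 n0 \<subseteq> cyl d k p0 n0"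
    and hom: "\<forall>x\<in>cyl d k p0 n0. \<forall>y\<in>cyl d k p0 n0. tdist d (f x) (f y) = c * tdist d x y"
    and c: "0 \<le> c" "c < 1" and p: "p \<in> cyl d k p0 n0" "f p \<noteq> p"
  obtains L where "L \<ge> n0" "\<forall>j\<ge>1. (f ^^ j) ` cyl d k p L \<inter> cyl d k p L = {}"
proof -
  obtain L0 where L0: "1 / real d ^ L0 < tdist d p (f p)"
    using ex_inv_pow_less[OF d2 tdist_pos[OF d2]] p(2) by metis
  define L where "L = max L0 n0"
  have sub: "cyl d k p L \<subseteq> cyl d k p0 n0"
    using cyl_antimono[of n0 L d k p] cyl_eq_of_mem[OF p(1)] unfolding L_def by simp
  have close: "tdist d p y < tdist d p (f p)" if "y \<in> cyl d k p L" for y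
  proof -
    have "tdist d p y \<le> 1 / real d ^ L" using that unfolding cyl_eq_closed_ball[OF d2] by simp
    also have "\<dots> \<le> 1 / real d ^ L0" using inv_pow_le_iff[OF d2] unfolding L_def by simp
    finally show ?thesis using L0 by linarith
  qed
  have "tdist d p (f p) \<le> tdist d p ((f ^^ j) y)" if "y \<in> cyl d k p L" "j \<ge> 1" for y j
    using contraction_displacement[OF d2 fB hom c p(1) _ close] sub that by blast
  then have "\<forall>j\<ge>1. (f ^^ j) ` cyl d k p L \<inter> cyl d k p L = {}" using close by force
  then show ?thesis using that[of L] unfolding L_def by simp
qed

lemma translation_wandering_ball:
  assumes d2: "d \<ge> 2" and k2: "k \<ge> 2" and tr: "translation d k h"
  obtains n :: int and C where "proper_ball d k C"
    "\<forall>j\<ge>1. ((h [^]\<^bsub>AAut d k\<^esub> n) ^^ j) ` C \<inter> C = {}"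
proof -
  interpret AA: group "AAut d k" by (rule AAut_group[OF d2 k2])
  obtain B and n :: int where hc: "h \<in> carrier (AAut d k)" and B: "is_ball d k B"
    and hom: "homothety_on d B (h [^]\<^bsub>AAut d k\<^esub> n)" and strict: "(h [^]\<^bsub>AAut d k\<^esub> n) ` B \<subset> B"
    using tr unfolding translation_def by blast
  define f where "f = h [^]\<^bsub>AAut d k\<^esub> n"
  have fa: "almost_aut d k f" unfolding f_def using hc by (simp add: AAut_carrier[symmetric])
  obtain p0 n0 where p0: "p0 \<in> boundary d k" and Beq: "B = cyl d k p0 n0"
    using is_ball_cyl[OF d2 B] .
  have n0: "n0 \<ge> 1"
  proof (rule ccontr)
    assume "\<not> n0 \<ge> 1"
    then have "B = boundary d k" using Beq by (simp add: not_less_eq_eq)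
    then show False using strict almost_aut_bij(2)[OF fa] unfolding f_def by simp
  qed
  obtain c where c: "c > 0" and homB: "\<forall>x\<in>B. \<forall>y\<in>B. tdist d (f x) (f y) = c * tdist d x y"
    using hom unfolding homothety_on_def f_def by blast
  have c1: "c < 1"
    using strict_self_homothety_ratio_less_1[OF d2 fa p0 n0 c] homB strict Beq
    unfolding f_def by simp
  obtain p where p: "p \<in> B" "f p \<noteq> p" using strict unfolding f_def by force
  have fB: "f ` cyl d k p0 n0 \<subseteq> cyl d k p0 n0" using strict Beq unfolding f_def by blast
  obtain L where L: "L \<ge> n0" "\<forall>j\<ge>1. (f ^^ j) ` cyl d k p L \<inter> cyl d k p L = {}"
    using contraction_wandering_cyl[OF d2 fB homB[unfolded Beq] less_imp_le[OF c] c1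
        p[unfolded Beq]] .
  moreover have "proper_ball d k (cyl d k p L)"
    using cyl_proper_ball[OF d2 k2 _ order_trans[OF n0 L(1)]] p(1) Beq cyl_subset_boundary by blast
  ultimately show ?thesis using that unfolding f_def by blast
qed

section \<open>Commutators and subgroups of finite index\<close>

lemma permutes_disjoint_commute:
  assumes \<sigma>: "\<sigma> permutes S" and \<tau>: "\<tau> permutes T" and ST: "S \<inter> T = {}"
  shows "\<sigma> \<circ> \<tau> = \<tau> \<circ> \<sigma>"
proof
  fix z
  consider "z \<in> S" | "z \<in> T" | "z \<notin> S" "z \<notin> T" by blast
  then have "\<sigma> (\<tau> z) = \<tau> (\<sigma> z)"
  proof cases
    case 1
    then have "z \<notin> T" "\<sigma> z \<notin> T" using ST permutes_in_image[OF \<sigma>] by blast+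
    then show ?thesis using permutes_not_in[OF \<tau>] by simp
  next
    case 2
    then have "z \<notin> S" "\<tau> z \<notin> S" using ST permutes_in_image[OF \<tau>] by blast+
    then show ?thesis using permutes_not_in[OF \<sigma>] by simp
  next
    case 3
    then show ?thesis using permutes_not_in[OF \<sigma>] permutes_not_in[OF \<tau>] by simp
  qed
  then show "(\<sigma> \<circ> \<tau>) z = (\<tau> \<circ> \<sigma>) z" by simp
qed

lemma permutes_conj:
  assumes a: "bij a" and \<sigma>: "\<sigma> permutes S"
  shows "a \<circ> \<sigma> \<circ> inv' a permutes a ` S"
proof -
  have "bij (a \<circ> \<sigma> \<circ> inv' a)" using a \<sigma> by (simp add: bij_comp bij_imp_bij_inv permutes_bij)
  moreover have "(a \<circ> \<sigma> \<circ> inv' a) z = z" if z: "z \<notin> a ` S" for z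
  proof -
    have az: "a (inv' a z) = z" using a by (simp add: bij_is_surj surj_f_inv_f)
    then have "inv' a z \<notin> S" using z by force
    then show ?thesis using permutes_not_in[OF \<sigma>] az by simp
  qed
  ultimately show ?thesis unfolding permutes_def bij_iff by blast
qed

lemma rcosets_subgroup_struct: "rcosets\<^bsub>G\<lparr>carrier := K\<rparr>\<^esub> H = (\<lambda>x. H #>\<^bsub>G\<^esub> x) ` K"
  unfolding RCOSETS_def r_coset_def by auto

definition commutator :: "('a, 'b) monoid_scheme \<Rightarrow> 'a \<Rightarrow> 'a \<Rightarrow> 'a" where
  "commutator G x y = x \<otimes>\<^bsub>G\<^esub> y \<otimes>\<^bsub>G\<^esub> inv\<^bsub>G\<^esub> x \<otimes>\<^bsub>G\<^esub> inv\<^bsub>G\<^esub> y"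

context group
begin

lemma commutator_mult_commuting:
  assumes c: "g \<in> carrier G" "p \<in> carrier G" "g' \<in> carrier G" "q \<in> carrier G"
    and pg: "p \<otimes> g' = g' \<otimes> p" and pq: "p \<otimes> q = q \<otimes> p" and qg: "q \<otimes> g = g \<otimes> q"
  shows "commutator G (g \<otimes> p) (g' \<otimes> q) = commutator G g g'"
proof -
  have "inv g \<otimes> (g \<otimes> q) \<otimes> inv g = q \<otimes> inv g" "inv g \<otimes> (q \<otimes> g) \<otimes> inv g = inv g \<otimes> q"
    using c by (simp_all add: m_assoc[symmetric], simp add: m_assoc)
  then have qig: "q \<otimes> inv g = inv g \<otimes> q" using qg by simp
  have swap: "p \<otimes> (g' \<otimes> z) = g' \<otimes> (p \<otimes> z)" "p \<otimes> (q \<otimes> z) = q \<otimes> (p \<otimes> z)"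
    "q \<otimes> (inv g \<otimes> z) = inv g \<otimes> (q \<otimes> z)" if "z \<in> carrier G" for z
    using pg pq qig c that by (simp_all add: m_assoc[symmetric])
  have cancel: "x \<otimes> (inv x \<otimes> z) = z" if "x \<in> carrier G" "z \<in> carrier G" for x z
    using that by (simp add: m_assoc[symmetric])
  show ?thesis using c unfolding commutator_def by (simp add: m_assoc inv_mult_group swap cancel)
qed

lemma commutator_conj_mem:
  assumes "subgroup \<Lambda> G" "g \<in> carrier G" "a \<in> \<Lambda>" "g \<otimes> a \<otimes> inv g \<in> \<Lambda>"
  shows "commutator G g a \<in> \<Lambda>"
proof -
  have "commutator G g a = (g \<otimes> a \<otimes> inv g) \<otimes> inv a"
    using assms subgroup.mem_carrier[OF assms(1)] unfolding commutator_def by simp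
  then show ?thesis using assms subgroup.m_closed subgroup.m_inv_closed by metis
qed

lemma subgroup_conj_stable:
  assumes "subgroup \<Lambda> G" "g \<in> carrier G"
  shows "subgroup {x \<in> \<Lambda>. g \<otimes> x \<otimes> inv g \<in> \<Lambda>} G"
proof (rule subgroupI)
  have c: "x \<in> carrier G" if "x \<in> \<Lambda>" for x using that subgroup.mem_carrier[OF assms(1)] by blast
  note closed = subgroup.m_inv_closed[OF assms(1)] subgroup.m_closed[OF assms(1)]
  show "{x \<in> \<Lambda>. g \<otimes> x \<otimes> inv g \<in> \<Lambda>} \<subseteq> carrier G" using c by auto
  show "{x \<in> \<Lambda>. g \<otimes> x \<otimes> inv g \<in> \<Lambda>} \<noteq> {}"
    using assms subgroup.one_closed[OF assms(1)] by (auto intro!: exI[of _ \<one>])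
  fix x y assume x: "x \<in> {x \<in> \<Lambda>. g \<otimes> x \<otimes> inv g \<in> \<Lambda>}" and y: "y \<in> {x \<in> \<Lambda>. g \<otimes> x \<otimes> inv g \<in> \<Lambda>}"
  have "g \<otimes> inv x \<otimes> inv g = inv (g \<otimes> x \<otimes> inv g)"
    using x assms(2) c by (simp add: inv_mult_group m_assoc)
  then show "inv x \<in> {x \<in> \<Lambda>. g \<otimes> x \<otimes> inv g \<in> \<Lambda>}" using x closed by auto
  have cancel: "inv g \<otimes> (g \<otimes> z) = z" if "z \<in> carrier G" for z
    using that assms(2) by (simp add: m_assoc[symmetric])
  have "g \<otimes> (x \<otimes> y) \<otimes> inv g = (g \<otimes> x \<otimes> inv g) \<otimes> (g \<otimes> y \<otimes> inv g)"
    using x y assms(2) c by (simp add: m_assoc cancel)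
  then show "x \<otimes> y \<in> {x \<in> \<Lambda>. g \<otimes> x \<otimes> inv g \<in> \<Lambda>}" using x y closed by auto
qed

lemma conj_inv_image_Int:
  assumes "g \<in> carrier G" "\<Lambda> \<subseteq> carrier G"
  shows "(\<lambda>h. inv g \<otimes> h \<otimes> inv (inv g)) ` \<Lambda> \<inter> \<Lambda> = {x \<in> \<Lambda>. g \<otimes> x \<otimes> inv g \<in> \<Lambda>}"
proof -
  have "g \<otimes> (inv g \<otimes> h \<otimes> g) \<otimes> inv g = h" "inv g \<otimes> (g \<otimes> h \<otimes> inv g) \<otimes> g = h"
    if "h \<in> carrier G" for h
    using that assms(1) by (simp_all add: m_assoc[symmetric], simp_all add: m_assoc)
  then show ?thesis using assms by (auto simp: image_iff) (metis subsetD)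
qed

lemma finite_index_Int:
  assumes H: "subgroup H G" and L: "subgroup L G" and "L \<subseteq> K"
    and fin: "finite ((\<lambda>x. H #> x) ` K)"
  shows "finite ((\<lambda>x. (H \<inter> L) #> x) ` L)"
proof -
  have "(H \<inter> L) #> l = (H #> l) \<inter> L" if l: "l \<in> L" for l
  proof
    show "(H \<inter> L) #> l \<subseteq> (H #> l) \<inter> L"
      using l subgroup.m_closed[OF L] unfolding r_coset_def by auto
    show "(H #> l) \<inter> L \<subseteq> (H \<inter> L) #> l"
    proof
      fix x assume "x \<in> (H #> l) \<inter> L"
      then obtain h where h: "h \<in> H" "x = h \<otimes> l" "x \<in> L" unfolding r_coset_def by blast
      have "h = x \<otimes> inv l"
        using h l subgroup.mem_carrier[OF H] subgroup.mem_carrier[OF L] by (simp add: m_assoc)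
      then have "h \<in> L" using h(3) l subgroup.m_closed[OF L] subgroup.m_inv_closed[OF L] by simp
      then show "x \<in> (H \<inter> L) #> l" using h unfolding r_coset_def by blast
    qed
  qed
  then have "(\<lambda>x. (H \<inter> L) #> x) ` L = (\<lambda>Y. Y \<inter> L) ` ((\<lambda>x. H #> x) ` L)" by (auto simp: image_image)
  then show ?thesis using fin assms(3) by (metis finite_imageI finite_subset image_mono)
qed

text \<open>Pigeonhole on the cosets of H met by the powers of a.\<close>

lemma finite_index_pow_mem:
  assumes H: "subgroup H G" and K: "subgroup K G" and fin: "finite ((\<lambda>x. H #> x) ` K)"
    and a: "a \<in> K"
  obtains m :: nat where "m \<ge> 1" "\<And>n. a [^] (m * n) \<in> H"
proof -
  have ac: "a \<in> carrier G" using a subgroup.mem_carrier[OF K] by blast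
  have "range (\<lambda>i::nat. H #> a [^] i) \<subseteq> (\<lambda>x. H #> x) ` K"
    using a subgroup_int_pow_closed[OF K a] by (auto simp: int_pow_int[symmetric])
  then have "finite (range (\<lambda>i::nat. H #> a [^] i))" using fin by (rule finite_subset)
  then have "\<not> inj (\<lambda>i::nat. H #> a [^] i)"
    using finite_imageD[of _ "UNIV :: nat set"] infinite_UNIV_nat by blast
  then obtain i' j' :: nat where "i' \<noteq> j'" "H #> a [^] i' = H #> a [^] j'"
    unfolding inj_def by blast
  then obtain i j :: nat where ij: "i < j" "H #> a [^] i = H #> a [^] j"
    by (metis linorder_neqE_nat)
  have "a [^] j \<in> H #> a [^] i" using ij(2) rcos_self[OF _ H] ac by simp
  then have "a [^] j \<otimes> inv (a [^] i) \<in> H"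
    using subgroup.rcos_module_imp[OF H is_group] ac by simp
  moreover have "a [^] j = a [^] (j - i) \<otimes> a [^] i"
    using nat_pow_mult[OF ac, of "j - i" i] ij(1) by simp
  ultimately have mem: "a [^] (j - i) \<in> H" using ac by (simp add: m_assoc)
  have "a [^] ((j - i) * n) \<in> H" for n
    using subgroup_int_pow_closed[OF H mem, of "int n"] ac by (simp add: int_pow_int nat_pow_pow)
  then show ?thesis using ij(1) by (intro that[of "j - i"]) auto
qed

end

section \<open>Commensurated subgroups\<close>

context
  fixes d k :: nat
  assumes d2: "d \<ge> 2" and k2: "k \<ge> 2"
begin

interpretation AA: group "AAut d k" by (rule AAut_group[OF d2 k2])

lemma rigid_stab_permutes:
  assumes "G \<subseteq> carrier (AAut d k)" "g \<in> rigid_stab d k G B"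
  shows "g permutes B"
proof -
  have "g \<in> G" using assms(2) unfolding rigid_stab_def by blast
  then have "almost_aut d k g" using assms(1) AAut_carrier by blast
  then have "bij g" "\<forall>x. x \<notin> boundary d k \<longrightarrow> g x = x"
    using almost_aut_bij(1)[of d k g] unfolding almost_aut_def by simp_all
  moreover have "\<forall>x\<in>boundary d k - B. g x = x" using assms(2) unfolding rigid_stab_def by blast
  ultimately show ?thesis unfolding permutes_def bij_iff by blast
qed

lemma commensurates_finite_index:
  assumes \<Lambda>: "subgroup \<Lambda> (AAut d k)" and G: "subgroup G (AAut d k)"
    and comm: "commensurates d k G \<Lambda>" and g: "g \<in> G"
  shows "finite ((\<lambda>x. {y \<in> \<Lambda>. g \<otimes>\<^bsub>AAut d k\<^esub> y \<otimes>\<^bsub>AAut d k\<^esub> inv\<^bsub>AAut d k\<^esub> g \<in> \<Lambda>}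
      #>\<^bsub>AAut d k\<^esub> x) ` \<Lambda>)"
proof -
  have "inv\<^bsub>AAut d k\<^esub> g \<in> G" using subgroup.m_inv_closed[OF G g] .
  then have "finite_index_in d k (conj_set d k (inv\<^bsub>AAut d k\<^esub> g) \<Lambda> \<inter> \<Lambda>) \<Lambda>"
    using comm unfolding commensurates_def by blast
  moreover have "conj_set d k (inv\<^bsub>AAut d k\<^esub> g) \<Lambda> \<inter> \<Lambda>
      = {y \<in> \<Lambda>. g \<otimes>\<^bsub>AAut d k\<^esub> y \<otimes>\<^bsub>AAut d k\<^esub> inv\<^bsub>AAut d k\<^esub> g \<in> \<Lambda>}"
    unfolding conj_set_def
    using AA.conj_inv_image_Int subgroup.mem_carrier[OF G g] subgroup.subset[OF \<Lambda>] by blast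
  ultimately show ?thesis unfolding finite_index_in_def rcosets_subgroup_struct by simp
qed

lemma commensurated_pow_conj_mem:
  assumes \<Lambda>: "subgroup \<Lambda> (AAut d k)" and G: "subgroup G (AAut d k)"
    and comm: "commensurates d k G \<Lambda>" and g: "g \<in> G" and f: "f \<in> \<Lambda>"
  shows "\<exists>m::nat \<ge> 1. \<forall>n.
    g \<otimes>\<^bsub>AAut d k\<^esub> f [^]\<^bsub>AAut d k\<^esub> (m * n) \<otimes>\<^bsub>AAut d k\<^esub> inv\<^bsub>AAut d k\<^esub> g \<in> \<Lambda>"
proof -
  have gc: "g \<in> carrier (AAut d k)" using subgroup.mem_carrier[OF G g] .
  show ?thesis
  proof (rule AA.finite_index_pow_mem[OF AA.subgroup_conj_stable[OF \<Lambda> gc] \<Lambda>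
        commensurates_finite_index[OF \<Lambda> G comm g] f])
    fix m :: nat
    assume "m \<ge> 1" "\<And>n. f [^]\<^bsub>AAut d k\<^esub> (m * n)
      \<in> {y \<in> \<Lambda>. g \<otimes>\<^bsub>AAut d k\<^esub> y \<otimes>\<^bsub>AAut d k\<^esub> inv\<^bsub>AAut d k\<^esub> g \<in> \<Lambda>}"
    then show ?thesis by auto
  qed
qed

text \<open>[g1, a] = g1 p and [g2, a \<circ> a] = g2 q with p supported on a ` C and q on a ` a ` C; as
  these sets and C are pairwise disjoint, p commutes with g2 and q, and q with g1.\<close>

lemma commutator_displaced:
  assumes g: "g1 \<in> carrier (AAut d k)" "g2 \<in> carrier (AAut d k)" "g1 permutes C" "g2 permutes C"
    and a: "a \<in> carrier (AAut d k)" "a ` C \<inter> C = {}" "a ` a ` C \<inter> C = {}"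
  shows "commutator (AAut d k) (commutator (AAut d k) g1 a)
      (commutator (AAut d k) g2 (a \<otimes>\<^bsub>AAut d k\<^esub> a)) = commutator (AAut d k) g1 g2"
proof -
  let ?A = "AAut d k"
  define a2 where "a2 = a \<otimes>\<^bsub>?A\<^esub> a"
  have a2: "a2 \<in> carrier ?A" "a2 = a \<circ> a"
    unfolding a2_def using a(1) by (simp, simp add: AAut_mult)
  define p where "p = a \<otimes>\<^bsub>?A\<^esub> inv\<^bsub>?A\<^esub> g1 \<otimes>\<^bsub>?A\<^esub> inv\<^bsub>?A\<^esub> a"
  define q where "q = a2 \<otimes>\<^bsub>?A\<^esub> inv\<^bsub>?A\<^esub> g2 \<otimes>\<^bsub>?A\<^esub> inv\<^bsub>?A\<^esub> a2"
  have pq: "p \<in> carrier ?A" "q \<in> carrier ?A" unfolding p_def q_def using a(1) a2(1) g by simp_all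
  have "commutator ?A g1 a = g1 \<otimes>\<^bsub>?A\<^esub> p" "commutator ?A g2 a2 = g2 \<otimes>\<^bsub>?A\<^esub> q"
    unfolding commutator_def p_def q_def using a(1) a2(1) g by (simp_all add: AA.m_assoc)
  moreover have "p = a \<circ> inv' g1 \<circ> inv' a" "q = a2 \<circ> inv' g2 \<circ> inv' a2"
    unfolding p_def q_def AAut_mult using AAut_inv[OF d2 k2] a(1) a2(1) g by simp_all
  then have "p permutes a ` C" "q permutes a2 ` C"
    using permutes_conj[OF AAut_bij[OF d2 k2 a(1)] permutes_inv[OF g(3)]]
      permutes_conj[OF AAut_bij[OF d2 k2 a2(1)] permutes_inv[OF g(4)]] by simp_all
  moreover have "a ` C \<inter> a2 ` C = {}"
  proof -
    have "a ` C \<inter> a2 ` C = a ` (C \<inter> a ` C)"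
      unfolding a2(2) image_comp[symmetric] using AAut_bij[OF d2 k2 a(1)]
      by (simp add: image_Int bij_is_inj)
    then show ?thesis using a(2) by auto
  qed
  ultimately show ?thesis
    using AA.commutator_mult_commuting[OF g(1) pq(1) g(2) pq(2)] permutes_disjoint_commute
      g(3,4) a(2,3) unfolding AAut_mult a2_def[symmetric] by (metis Int_commute image_comp a2(2))
qed

lemma rigid_stab_commutator_mem:
  assumes \<Lambda>: "subgroup \<Lambda> (AAut d k)" and G: "subgroup G (AAut d k)"
    and comm: "commensurates d k G \<Lambda>" and f: "f \<in> \<Lambda>"
    and wander: "\<forall>j\<ge>1. (f ^^ j) ` C \<inter> C = {}"
    and g1: "g1 \<in> rigid_stab d k G C" and g2: "g2 \<in> rigid_stab d k G C"
  shows "commutator (AAut d k) g1 g2 \<in> \<Lambda>"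
proof -
  let ?A = "AAut d k"
  have Gc: "G \<subseteq> carrier ?A" using subgroup.subset[OF G] .
  have gG: "g1 \<in> G" "g2 \<in> G" using g1 g2 unfolding rigid_stab_def by auto
  have gc: "g1 \<in> carrier ?A" "g2 \<in> carrier ?A" using gG Gc by auto
  have fc: "f \<in> carrier ?A" using subgroup.mem_carrier[OF \<Lambda> f] .
  obtain m1 :: nat where m1: "m1 \<ge> 1"
      "\<forall>n. g1 \<otimes>\<^bsub>?A\<^esub> f [^]\<^bsub>?A\<^esub> (m1 * n) \<otimes>\<^bsub>?A\<^esub> inv\<^bsub>?A\<^esub> g1 \<in> \<Lambda>"
    using commensurated_pow_conj_mem[OF \<Lambda> G comm gG(1) f] by blast
  obtain m2 :: nat where m2: "m2 \<ge> 1"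
      "\<forall>n. g2 \<otimes>\<^bsub>?A\<^esub> f [^]\<^bsub>?A\<^esub> (m2 * n) \<otimes>\<^bsub>?A\<^esub> inv\<^bsub>?A\<^esub> g2 \<in> \<Lambda>"
    using commensurated_pow_conj_mem[OF \<Lambda> G comm gG(2) f] by blast
  define a where "a = f [^]\<^bsub>?A\<^esub> (m1 * m2)"
  have ac: "a \<in> carrier ?A" unfolding a_def using fc by simp
  have aL: "a \<in> \<Lambda>"
    unfolding a_def using AA.subgroup_int_pow_closed[OF \<Lambda> f, of "int (m1 * m2)"]
    by (simp only: int_pow_int)
  have "m2 * (2 * m1) = m1 * m2 + m1 * m2" by simp
  then have a2: "a \<otimes>\<^bsub>?A\<^esub> a = f [^]\<^bsub>?A\<^esub> (m2 * (2 * m1))"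
    unfolding a_def using AA.nat_pow_mult[OF fc] by (simp only:)
  have "commutator ?A g1 a \<in> \<Lambda>"
    using AA.commutator_conj_mem[OF \<Lambda> gc(1) aL] m1(2) unfolding a_def by (simp add: mult.commute)
  moreover have "commutator ?A g2 (a \<otimes>\<^bsub>?A\<^esub> a) \<in> \<Lambda>"
    using AA.commutator_conj_mem[OF \<Lambda> gc(2) subgroup.m_closed[OF \<Lambda> aL aL]] m2(2)
    unfolding a2 by simp
  ultimately have "commutator ?A (commutator ?A g1 a) (commutator ?A g2 (a \<otimes>\<^bsub>?A\<^esub> a)) \<in> \<Lambda>"
    unfolding commutator_def[of ?A "commutator ?A g1 a"]
    by (intro subgroup.m_closed[OF \<Lambda>] subgroup.m_inv_closed[OF \<Lambda>])
  moreover have j: "m1 * m2 \<ge> 1" using m1(1) m2(1) by simp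
  then have "a ` C \<inter> C = {}" "a ` a ` C \<inter> C = {}"
    using wander[rule_format, OF j] wander[rule_format, of "m1 * m2 + m1 * m2"] j
    unfolding a_def AAut_pow by (simp_all add: image_comp funpow_add[symmetric])
  ultimately show ?thesis
    using commutator_displaced[OF gc rigid_stab_permutes[OF Gc g1] rigid_stab_permutes[OF Gc g2] ac]
    by simp
qed

lemma derived_rigid_stab_subset:
  assumes \<Lambda>: "subgroup \<Lambda> (AAut d k)" and G: "subgroup G (AAut d k)"
    and comm: "commensurates d k G \<Lambda>" and f: "f \<in> \<Lambda>"
    and wander: "\<forall>j\<ge>1. (f ^^ j) ` C \<inter> C = {}"
  shows "derived (AAut d k) (rigid_stab d k G C) \<subseteq> \<Lambda>"
  unfolding derived_def
  by (rule AA.generate_subgroup_incl[OF _ \<Lambda>])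
    (use rigid_stab_commutator_mem[OF \<Lambda> G comm f wander] in \<open>auto simp: commutator_def\<close>)

lemma generate_conj_subset:
  assumes \<Lambda>: "subgroup \<Lambda> (AAut d k)" and G: "subgroup G (AAut d k)"
    and comm: "commensurates d k G \<Lambda>"
    and L: "subgroup L (AAut d k)" "L \<subseteq> \<Lambda>" "no_proper_fi_subgroup d k L"
  shows "generate (AAut d k) (\<Union>g\<in>G. conj_set d k g L) \<subseteq> \<Lambda>"
proof (rule AA.generate_subgroup_incl[OF _ \<Lambda>])
  show "(\<Union>g\<in>G. conj_set d k g L) \<subseteq> \<Lambda>"
  proof (rule UN_least)
    fix g assume g: "g \<in> G"
    define H where "H = {y \<in> \<Lambda>. g \<otimes>\<^bsub>AAut d k\<^esub> y \<otimes>\<^bsub>AAut d k\<^esub> inv\<^bsub>AAut d k\<^esub> g \<in> \<Lambda>}"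
    have H: "subgroup H (AAut d k)"
      unfolding H_def by (rule AA.subgroup_conj_stable[OF \<Lambda> subgroup.mem_carrier[OF G g]])
    have "finite ((\<lambda>x. (H \<inter> L) #>\<^bsub>AAut d k\<^esub> x) ` L)"
      using AA.finite_index_Int[OF H L(1,2)] commensurates_finite_index[OF \<Lambda> G comm g]
      unfolding H_def by blast
    then have "H \<inter> L = L"
      using L(3) AA.subgroups_Inter_pair[OF H L(1)]
      unfolding no_proper_fi_subgroup_def finite_index_in_def rcosets_subgroup_struct by blast
    then show "conj_set d k g L \<subseteq> \<Lambda>" unfolding H_def conj_set_def by blast
  qed
qed

end

theorem mainTheorem16:
  fixes d k :: nat and \<Lambda> G :: "(ray \<Rightarrow> ray) set"
  assumes "d \<ge> 2" and "k \<ge> 2"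
    and "subgroup \<Lambda> (AAut d k)" and "\<exists>h\<in>\<Lambda>. translation d k h"
    and "subgroup G (AAut d k)" and "commensurates d k G \<Lambda>"
  shows "\<exists>B. proper_ball d k B \<and>
           derived (AAut d k) (rigid_stab d k G B) \<subseteq> \<Lambda> \<and>
           (\<forall>L. subgroup L (AAut d k) \<and> L \<subseteq> derived (AAut d k) (rigid_stab d k G B) \<and>
                no_proper_fi_subgroup d k L \<longrightarrow>
                generate (AAut d k) (\<Union>g\<in>G. conj_set d k g L) \<subseteq> \<Lambda>)"
proof -
  interpret AA: group "AAut d k" using assms(1,2) by (rule AAut_group)
  obtain h where h: "h \<in> \<Lambda>" "translation d k h" using assms(4) by blast
  obtain n :: int and C where C: "proper_ball d k C"
    "\<forall>j\<ge>1. ((h [^]\<^bsub>AAut d k\<^esub> n) ^^ j) ` C \<inter> C = {}"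
    using translation_wandering_ball[OF assms(1,2) h(2)] .
  have "h [^]\<^bsub>AAut d k\<^esub> n \<in> \<Lambda>" using AA.subgroup_int_pow_closed[OF assms(3) h(1)] .
  then have derived: "derived (AAut d k) (rigid_stab d k G C) \<subseteq> \<Lambda>"
    using derived_rigid_stab_subset[OF assms(1,2,3,5,6) _ C(2)] by blast
  moreover have "generate (AAut d k) (\<Union>g\<in>G. conj_set d k g L) \<subseteq> \<Lambda>"
    if "subgroup L (AAut d k)" "L \<subseteq> derived (AAut d k) (rigid_stab d k G C)"
      "no_proper_fi_subgroup d k L" for L
    using generate_conj_subset[OF assms(1,2,3,5,6)] that derived by blast
  ultimately show ?thesis using C(1) by blast
qed

end
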